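(* Let $(X,d)$ be a metric space and let $U\subseteq F_{USCG}(X)$. Then $U$ is totally bounded in $(F_{USCG}(X),H_{\rm end})$ if and only if $U(\alpha)=\bigcup_{u\in U}[u]_\alpha$ is totally bounded in $X$ for each $\alpha\in(0,1]$.
   Context: A fuzzy set on $X$ is a function $u:X\to[0,1]$, with $\alpha$-cuts $[u]_\alpha=\{x: u(x)\ge\alpha\}$ for $\alpha\in(0,1]$ and $[u]_0=\overline{\{u>0\}}$. $F_{USC}(X)$ is the set of fuzzy sets with all $\alpha$-cuts ($\alpha\in[0,1]$) non-empty and closed; $F_{USCG}(X)=\{u\in F_{USC}(X): [u]_\alpha\text{ compact for all }\alpha\in(0,1]\}$. $X\times[0,1]$ is metrized by $\overline{d}((x,\alpha),(y,\beta))=d(x,y)+|\alpha-\beta|$; ${\rm end}\,u=\{(x,t)\in X\times[0,1]: u(x)\ge t\}$; $H_{\rm end}(u,v)=H({\rm end}\,u,{\rm end}\,v)$ where $H$ is the Hausdorff distance $H(A,B)=\max\{\sup_{a\in A}\inf_{b\in B}\overline{d}(a,b),\sup_{b\in B}\inf_{a\in A}\overline{d}(a,b)\}$. *)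

theory Defs
  imports "HOL-Analysis.Analysis"
begin

definition fuzzy :: "('a \<Rightarrow> real) \<Rightarrow> bool" where
  "fuzzy u \<longleftrightarrow> (\<forall>x. 0 \<le> u x \<and> u x \<le> 1)"

definition cut :: "('a::topological_space \<Rightarrow> real) \<Rightarrow> real \<Rightarrow> 'a set" where
  "cut u \<alpha> = (if \<alpha> = 0 then closure {x. u x > 0} else {x. u x \<ge> \<alpha>})"

definition F_USC :: "('a::topological_space \<Rightarrow> real) set" where
  "F_USC = {u. fuzzy u \<and> (\<forall>\<alpha>\<in>{0..1}. cut u \<alpha> \<noteq> {} \<and> closed (cut u \<alpha>))}"

definition F_USCG :: "('a::topological_space \<Rightarrow> real) set" where
  "F_USCG = {u \<in> F_USC. \<forall>\<alpha>\<in>{0<..1}. compact (cut u \<alpha>)}"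

definition dbar :: "('a::metric_space \<times> real) \<Rightarrow> ('a \<times> real) \<Rightarrow> real" where
  "dbar p q = dist (fst p) (fst q) + \<bar>snd p - snd q\<bar>"

definition endo :: "('a \<Rightarrow> real) \<Rightarrow> ('a \<times> real) set" where
  "endo u = {(x, t). t \<in> {0..1} \<and> u x \<ge> t}"

definition Haus :: "('a::metric_space \<times> real) set \<Rightarrow> ('a \<times> real) set \<Rightarrow> real" where
  "Haus A B = max (SUP a\<in>A. INF b\<in>B. dbar a b) (SUP b\<in>B. INF a\<in>A. dbar a b)"

definition H_end :: "('a::metric_space \<Rightarrow> real) \<Rightarrow> ('a \<Rightarrow> real) \<Rightarrow> real" where
  "H_end u v = Haus (endo u) (endo v)"

definition Hend_totally_bounded :: "('a::metric_space \<Rightarrow> real) set \<Rightarrow> bool" where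
  "Hend_totally_bounded U \<longleftrightarrow>
     (\<forall>\<epsilon>>0. \<exists>K. finite K \<and> K \<subseteq> U \<and> U \<subseteq> (\<Union>v\<in>K. {u. H_end u v < \<epsilon>}))"

end

theory Submission
  imports Defs
begin

text \<open>If \<open>H_end u v < \<delta> < \<alpha>\<close>, every point of \<open>[u]_\<alpha>\<close> lies within \<open>\<delta>\<close> of \<open>[v]_(\<alpha>-\<delta>)\<close>; so for
  \<open>H_end\<close>-totally bounded \<open>U\<close>, \<open>U(\<alpha>)\<close> is approximated arbitrarily well by finite unions of compact
  cuts. Conversely, fix a grid \<open>1/n, 2/n, \<dots>, 1\<close> of levels and a finite \<open>\<delta>\<close>-net \<open>N\<close> of \<open>U(1/n)\<close>, and
  record as the trace of \<open>u\<close> which net points are \<open>\<delta>\<close>-close to which grid cut of \<open>u\<close>. There are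
  finitely many traces, and two fuzzy sets with the same trace have all grid cuts \<open>2\<delta>\<close>-close,
  hence \<open>H_end\<close>-distance at most \<open>2\<delta> + 1/n\<close>.\<close>

lemma dbar_nonneg: "0 \<le> dbar p q"
  by (simp add: dbar_def)

lemma dbar_commute: "dbar p q = dbar q p"
  by (simp add: dbar_def dist_commute abs_minus_commute)

lemma Haus_le:
  fixes A B :: "('a::metric_space \<times> real) set"
  assumes "A \<noteq> {}" "B \<noteq> {}"
    and "\<forall>a\<in>A. \<exists>b\<in>B. dbar a b \<le> c" "\<forall>b\<in>B. \<exists>a\<in>A. dbar b a \<le> c"
  shows "Haus A B \<le> c"
proof -
  have bdd_B: "bdd_below ((\<lambda>b. dbar a b) ` B)" for a
    by (rule bdd_belowI2[where m = 0]) (rule dbar_nonneg)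
  have bdd_A: "bdd_below ((\<lambda>a. dbar a b) ` A)" for b
    by (rule bdd_belowI2[where m = 0]) (rule dbar_nonneg)
  have "(SUP a\<in>A. INF b\<in>B. dbar a b) \<le> c"
  proof (rule cSUP_least[OF \<open>A \<noteq> {}\<close>])
    fix a assume "a \<in> A"
    then obtain b where "b \<in> B" "dbar a b \<le> c" using assms(3) by blast
    then show "(INF b\<in>B. dbar a b) \<le> c" by (rule cINF_lower2[OF bdd_B])
  qed
  moreover have "(SUP b\<in>B. INF a\<in>A. dbar a b) \<le> c"
  proof (rule cSUP_least[OF \<open>B \<noteq> {}\<close>])
    fix b assume "b \<in> B"
    then obtain a where "a \<in> A" "dbar a b \<le> c" using assms(4) by (auto simp: dbar_commute)
    then show "(INF a\<in>A. dbar a b) \<le> c" by (rule cINF_lower2[OF bdd_A])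
  qed
  ultimately show ?thesis by (simp add: Haus_def)
qed

text \<open>The bound \<open>c\<close> only serves to make the supremum in \<open>Haus\<close> a genuine one.\<close>

lemma Haus_less_imp_near:
  assumes "\<forall>a\<in>A. \<exists>b\<in>B. dbar a b \<le> c" "Haus A B < e" "a \<in> A"
  shows "\<exists>b\<in>B. dbar a b < e"
proof -
  have bdd: "bdd_below ((\<lambda>b. dbar p b) ` B)" for p
    by (rule bdd_belowI2[where m = 0]) (rule dbar_nonneg)
  have "B \<noteq> {}" using assms(1,3) by blast
  have inf_le: "(INF b\<in>B. dbar p b) \<le> c" if "p \<in> A" for p
  proof -
    obtain b where "b \<in> B" "dbar p b \<le> c" using assms(1) \<open>p \<in> A\<close> by blast
    then show ?thesis using cINF_lower2[OF bdd] by blast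
  qed
  have "bdd_above ((\<lambda>p. INF b\<in>B. dbar p b) ` A)"
    by (rule bdd_aboveI2) (rule inf_le)
  then have "(INF b\<in>B. dbar a b) \<le> (SUP p\<in>A. INF b\<in>B. dbar p b)"
    using cSUP_upper[OF assms(3)] by blast
  also have "\<dots> \<le> Haus A B" by (simp add: Haus_def)
  finally have "(INF b\<in>B. dbar a b) < e" using assms(2) by linarith
  then show ?thesis using cINF_less_iff[OF \<open>B \<noteq> {}\<close> bdd] by blast
qed

lemma F_USCG_fuzzy: "u \<in> F_USCG \<Longrightarrow> fuzzy u"
  by (simp add: F_USCG_def F_USC_def)

lemma F_USCG_compact_cut: "u \<in> F_USCG \<Longrightarrow> 0 < \<alpha> \<Longrightarrow> \<alpha> \<le> 1 \<Longrightarrow> compact (cut u \<alpha>)"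
  by (simp add: F_USCG_def)

lemma mem_cut_iff: "0 < \<alpha> \<Longrightarrow> x \<in> cut u \<alpha> \<longleftrightarrow> \<alpha> \<le> u x"
  by (simp add: cut_def)

lemma cut_antimono: "0 < \<alpha> \<Longrightarrow> \<alpha> \<le> \<beta> \<Longrightarrow> cut u \<beta> \<subseteq> cut u \<alpha>"
  by (auto simp: cut_def)

lemma fuzzy_ground_in_endo: "fuzzy u \<Longrightarrow> (x, 0) \<in> endo u"
  by (simp add: endo_def fuzzy_def)

lemma endo_near_fuzzy_endo:
  assumes "fuzzy v" "p \<in> endo u"
  shows "\<exists>q\<in>endo v. dbar p q \<le> 1"
proof -
  obtain x t where "p = (x, t)" "0 \<le> t" "t \<le> 1" using assms(2) by (auto simp: endo_def)
  then have "dbar p (x, 0) \<le> 1" by (simp add: dbar_def)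
  with fuzzy_ground_in_endo[OF assms(1)] show ?thesis by blast
qed

lemma H_end_less_imp_near:
  assumes "fuzzy v" "H_end u v < e" "(x, t) \<in> endo u"
  shows "\<exists>y s. (y, s) \<in> endo v \<and> dist x y + \<bar>t - s\<bar> < e"
proof -
  have "\<forall>p\<in>endo u. \<exists>q\<in>endo v. dbar p q \<le> 1"
    using endo_near_fuzzy_endo[OF assms(1)] by blast
  from Haus_less_imp_near[OF this assms(2)[unfolded H_end_def] assms(3)]
  obtain y s where "(y, s) \<in> endo v" "dbar (x, t) (y, s) < e" by auto
  then show ?thesis by (auto simp: dbar_def)
qed

lemma H_end_le:
  assumes "fuzzy u" "fuzzy v"
    and "\<forall>p\<in>endo u. \<exists>q\<in>endo v. dbar p q \<le> c" "\<forall>q\<in>endo v. \<exists>p\<in>endo u. dbar q p \<le> c"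
  shows "H_end u v \<le> c"
  unfolding H_end_def
proof (rule Haus_le)
  show "endo u \<noteq> {}" "endo v \<noteq> {}"
    using fuzzy_ground_in_endo[OF assms(1)] fuzzy_ground_in_endo[OF assms(2)] by blast+
qed (use assms in blast)+

lemma cut_near_cut_if_H_end_less:
  assumes "fuzzy v" "H_end u v < \<delta>" "0 < \<delta>" "\<delta> < \<alpha>" "\<alpha> \<le> 1" "x \<in> cut u \<alpha>"
  shows "\<exists>y\<in>cut v (\<alpha> - \<delta>). dist x y < \<delta>"
proof -
  have "(x, \<alpha>) \<in> endo u" using assms(3-6) by (simp add: mem_cut_iff endo_def)
  then obtain y s where ys: "(y, s) \<in> endo v" "dist x y + \<bar>\<alpha> - s\<bar> < \<delta>"
    using H_end_less_imp_near[OF assms(1,2)] by blast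
  have "\<alpha> - \<delta> \<le> s" using ys(2) abs_ge_self[of "\<alpha> - s"] zero_le_dist[of x y] by linarith
  also have "s \<le> v y" using ys(1) by (simp add: endo_def)
  finally have "\<alpha> - \<delta> \<le> v y" .
  then have "y \<in> cut v (\<alpha> - \<delta>)" using assms(4) by (simp add: mem_cut_iff)
  moreover have "dist x y < \<delta>" using ys(2) by linarith
  ultimately show ?thesis by blast
qed

lemma totally_bounded_if_approximable:
  fixes S :: "'a::metric_space set"
  assumes "\<And>e. e > 0 \<Longrightarrow> \<exists>T. totally_bounded T \<and> (\<forall>x\<in>S. \<exists>y\<in>T. dist x y < e)"
  shows "totally_bounded S"
  unfolding totally_bounded_metric
proof (intro allI impI)
  fix e :: real assume "e > 0"
  then obtain T where T: "totally_bounded T" "\<forall>x\<in>S. \<exists>y\<in>T. dist x y < e/2"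
    using assms[of "e/2"] by auto
  then obtain k where k: "finite k" "T \<subseteq> (\<Union>z\<in>k. {y. dist z y < e/2})"
    using \<open>e > 0\<close> unfolding totally_bounded_metric by (meson half_gt_zero)
  have "S \<subseteq> (\<Union>z\<in>k. {x. dist z x < e})"
  proof
    fix x assume "x \<in> S"
    then obtain y z where "dist x y < e/2" "z \<in> k" "dist z y < e/2" using T(2) k(2) by blast
    moreover from this have "dist z x < e"
      using dist_triangle3[of z x y] by (simp add: dist_commute)
    ultimately show "x \<in> (\<Union>z\<in>k. {x. dist z x < e})" by blast
  qed
  with k(1) show "\<exists>k. finite k \<and> S \<subseteq> (\<Union>z\<in>k. {x. dist z x < e})" by blast
qed

lemma compact_imp_totally_bounded:
  fixes S :: "'a::metric_space set"
  shows "compact S \<Longrightarrow> totally_bounded S"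
  by (simp add: compact_eq_totally_bounded totally_bounded_metric ball_def)

lemma totally_bounded_cut_Union_if_Hend_totally_bounded:
  fixes U :: "('a::metric_space \<Rightarrow> real) set"
  assumes U: "U \<subseteq> F_USCG" and tb: "Hend_totally_bounded U" and \<alpha>: "0 < \<alpha>" "\<alpha> \<le> 1"
  shows "totally_bounded (\<Union>u\<in>U. cut u \<alpha>)"
proof (rule totally_bounded_if_approximable)
  fix e :: real assume "e > 0"
  define \<delta> where "\<delta> = min e (\<alpha>/2)"
  have \<delta>: "0 < \<delta>" "\<delta> \<le> e" "\<delta> < \<alpha>" using \<open>e > 0\<close> \<alpha> by (auto simp: \<delta>_def)
  have "\<exists>K. finite K \<and> K \<subseteq> U \<and> U \<subseteq> (\<Union>v\<in>K. {u. H_end u v < \<delta>})"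
    using tb \<delta>(1) unfolding Hend_totally_bounded_def by simp
  then obtain K where K: "finite K" "K \<subseteq> U" "U \<subseteq> (\<Union>v\<in>K. {u. H_end u v < \<delta>})"
    by (elim exE conjE)
  define T where "T = (\<Union>v\<in>K. cut v (\<alpha> - \<delta>))"
  have "compact T"
    unfolding T_def
  proof (rule compact_UN[OF K(1)])
    fix v assume "v \<in> K"
    then show "compact (cut v (\<alpha> - \<delta>))"
      using K(2) U \<delta> \<alpha> by (intro F_USCG_compact_cut) auto
  qed
  moreover have "\<exists>y\<in>T. dist x y < e" if "x \<in> (\<Union>u\<in>U. cut u \<alpha>)" for x
  proof -
    from that obtain u where u: "u \<in> U" "x \<in> cut u \<alpha>" by blast
    with K(3) obtain v where v: "v \<in> K" "H_end u v < \<delta>" by blast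
    have "fuzzy v" using v(1) K(2) U F_USCG_fuzzy by blast
    then obtain y where y: "y \<in> cut v (\<alpha> - \<delta>)" "dist x y < \<delta>"
      using cut_near_cut_if_H_end_less[OF _ v(2) \<delta>(1,3) \<alpha>(2) u(2)] by blast
    have "y \<in> T" using y(1) v(1) by (auto simp: T_def)
    moreover have "dist x y < e" using y(2) \<delta>(2) by linarith
    ultimately show ?thesis by blast
  qed
  ultimately show "\<exists>T. totally_bounded T \<and> (\<forall>x\<in>\<Union>u\<in>U. cut u \<alpha>. \<exists>y\<in>T. dist x y < e)"
    using compact_imp_totally_bounded by blast
qed

lemma grid_level_below:
  fixes n :: nat
  assumes "0 < n" "1 / n \<le> t" "t \<le> 1"
  obtains i :: nat where "1 \<le> i" "i \<le> n" "real i / n \<le> t" "t - real i / n < 1 / n"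
proof
  define i where "i = nat \<lfloor>t * n\<rfloor>"
  have "1 \<le> t * n" "t * n \<le> n" using assms by (simp_all add: field_simps)
  then have i: "real i \<le> t * n" "t * n < real i + 1"
    by (auto simp: i_def le_floor_iff)
  then show "1 \<le> i" "i \<le> n" using \<open>1 \<le> t * n\<close> \<open>t * n \<le> n\<close> by linarith+
  show "real i / n \<le> t" using i(1) assms(1) by (simp add: field_simps)
  have "t < (real i + 1) / n" using i(2) assms(1) by (simp add: field_simps)
  then show "t - real i / n < 1 / n" by (simp add: add_divide_distrib)
qed

text \<open>A point \<open>(x, t)\<close> of \<open>end u\<close> is matched at the grid level \<open>i/n\<close> just below \<open>t\<close>, or at height
  \<open>0\<close> if \<open>t < 1/n\<close>.\<close>

lemma endo_near_if_grid_cuts_near: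
  fixes n :: nat
  assumes "fuzzy v" "0 < n" "0 \<le> r"
    and near: "\<forall>i\<in>{1..n}. \<forall>x\<in>cut u (i / n). \<exists>y\<in>cut v (i / n). dist x y \<le> r"
    and "p \<in> endo u"
  shows "\<exists>q\<in>endo v. dbar p q \<le> r + 1 / n"
proof -
  obtain x t where p: "p = (x, t)" "0 \<le> t" "t \<le> 1" "t \<le> u x"
    using assms(5) by (auto simp: endo_def)
  show ?thesis
  proof (cases "t < 1 / n")
    case True
    then have "dbar p (x, 0) \<le> r + 1 / n" using p(1,2) \<open>0 \<le> r\<close> by (simp add: dbar_def)
    with fuzzy_ground_in_endo[OF assms(1)] show ?thesis by blast
  next
    case False
    then have "1 / n \<le> t" by simp
    then obtain i :: nat where i: "1 \<le> i" "i \<le> n" "real i / n \<le> t" "t - real i / n < 1 / n"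
      using grid_level_below[OF \<open>0 < n\<close> _ p(3)] by blast
    have level_pos: "0 < real i / n" using i(1) \<open>0 < n\<close> by simp
    then have "x \<in> cut u (i / n)" using i(3) p(4) by (simp add: mem_cut_iff)
    moreover have "i \<in> {1..n}" using i(1,2) by simp
    ultimately obtain y where y: "y \<in> cut v (i / n)" "dist x y \<le> r" using near by blast
    have "(y, real i / n) \<in> endo v"
      using y(1) level_pos i(3) p(3) by (simp add: mem_cut_iff endo_def)
    moreover have "dbar p (y, real i / n) \<le> r + 1 / n"
      using y(2) i(3,4) p(1) by (simp add: dbar_def)
    ultimately show ?thesis by blast
  qed
qed

lemma H_end_le_if_grid_cuts_near:
  fixes n :: nat
  assumes "fuzzy u" "fuzzy v" "0 < n" "0 \<le> r"
    and "\<forall>i\<in>{1..n}. \<forall>x\<in>cut u (i / n). \<exists>y\<in>cut v (i / n). dist x y \<le> r"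
    and "\<forall>i\<in>{1..n}. \<forall>y\<in>cut v (i / n). \<exists>x\<in>cut u (i / n). dist y x \<le> r"
  shows "H_end u v \<le> r + 1 / n"
proof (rule H_end_le[OF assms(1,2)])
  show "\<forall>p\<in>endo u. \<exists>q\<in>endo v. dbar p q \<le> r + 1 / n"
    using endo_near_if_grid_cuts_near[OF assms(2,3,4,5)] by blast
  show "\<forall>q\<in>endo v. \<exists>p\<in>endo u. dbar q p \<le> r + 1 / n"
    using endo_near_if_grid_cuts_near[OF assms(1,3,4,6)] by blast
qed

definition net_trace :: "nat \<Rightarrow> 'a set \<Rightarrow> real \<Rightarrow> ('a::metric_space \<Rightarrow> real) \<Rightarrow> (nat \<times> 'a) set" where
  "net_trace n N \<delta> u = {(i, p) \<in> {1..n} \<times> N. \<exists>x\<in>cut u (real i / n). dist p x < \<delta>}"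

lemma finite_net_trace_image: "finite N \<Longrightarrow> finite (net_trace n N \<delta> ` U)"
  by (rule finite_subset[of _ "Pow ({1..n} \<times> N)"]) (auto simp: net_trace_def)

lemma grid_cuts_near_if_net_trace_eq:
  fixes n :: nat
  assumes "0 < n" "cut u (1 / n) \<subseteq> (\<Union>p\<in>N. {y. dist p y < \<delta>})"
    and "net_trace n N \<delta> u = net_trace n N \<delta> v"
  shows "\<forall>i\<in>{1..n}. \<forall>x\<in>cut u (i / n). \<exists>y\<in>cut v (i / n). dist x y \<le> 2 * \<delta>"
proof (intro ballI)
  fix i x assume i: "i \<in> {1..n}" and x: "x \<in> cut u (i / n)"
  have "cut u (i / n) \<subseteq> cut u (1 / n)"
    using i assms(1) by (intro cut_antimono) (simp_all add: divide_right_mono)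
  with x assms(2) obtain p where p: "p \<in> N" "dist p x < \<delta>" by blast
  then have "(i, p) \<in> net_trace n N \<delta> v" using i x assms(3)[symmetric] by (auto simp: net_trace_def)
  then obtain y where y: "y \<in> cut v (i / n)" "dist p y < \<delta>" by (auto simp: net_trace_def)
  have "dist x y \<le> 2 * \<delta>" using p(2) y(2) dist_triangle3[of x y p] by linarith
  with y(1) show "\<exists>y\<in>cut v (i / n). dist x y \<le> 2 * \<delta>" by blast
qed

lemma Hend_totally_bounded_if_cut_Union_totally_bounded:
  fixes U :: "('a::metric_space \<Rightarrow> real) set"
  assumes U: "U \<subseteq> F_USCG"
    and tb: "\<And>\<alpha>. 0 < \<alpha> \<Longrightarrow> \<alpha> \<le> 1 \<Longrightarrow> totally_bounded (\<Union>u\<in>U. cut u \<alpha>)"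
  shows "Hend_totally_bounded U"
  unfolding Hend_totally_bounded_def
proof (intro allI impI)
  fix e :: real assume "e > 0"
  then obtain n :: nat where n: "0 < n" "1 / n < e / 2"
    using ex_inverse_of_nat_less[of "e / 2"] by (auto simp: inverse_eq_divide)
  define \<delta> where "\<delta> = e / 8"
  have "0 < \<delta>" using \<open>e > 0\<close> by (simp add: \<delta>_def)
  have "totally_bounded (\<Union>u\<in>U. cut u (1 / n))" using tb n(1) by simp
  then have "\<exists>N. finite N \<and> (\<Union>u\<in>U. cut u (1 / n)) \<subseteq> (\<Union>p\<in>N. {y. dist p y < \<delta>})"
    using \<open>0 < \<delta>\<close> unfolding totally_bounded_metric by simp
  then obtain N where N: "finite N" "(\<Union>u\<in>U. cut u (1 / n)) \<subseteq> (\<Union>p\<in>N. {y. dist p y < \<delta>})"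
    by (elim exE conjE)
  let ?trace = "net_trace n N \<delta>"
  obtain K where K: "K \<subseteq> U" "finite K" "?trace ` U = ?trace ` K"
    using finite_subset_image[OF finite_net_trace_image[OF N(1), of n \<delta> U] subset_refl] by blast
  have close: "H_end u v < e" if "u \<in> U" "v \<in> U" "?trace u = ?trace v" for u v
  proof -
    have "cut u (1 / n) \<subseteq> (\<Union>p\<in>N. {y. dist p y < \<delta>})" "cut v (1 / n) \<subseteq> (\<Union>p\<in>N. {y. dist p y < \<delta>})"
      using that(1,2) N(2) by blast+
    then have "H_end u v \<le> 2 * \<delta> + 1 / n"
      using that U \<open>0 < \<delta>\<close> n(1)
      by (intro H_end_le_if_grid_cuts_near grid_cuts_near_if_net_trace_eq F_USCG_fuzzy) auto
    also have "\<dots> < e" unfolding \<delta>_def using n(2) \<open>e > 0\<close> by linarith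
    finally show ?thesis .
  qed
  have "U \<subseteq> (\<Union>v\<in>K. {u. H_end u v < e})"
  proof
    fix u assume "u \<in> U"
    then obtain v where "v \<in> K" "?trace u = ?trace v" using K(3) by blast
    with close[of u v] \<open>u \<in> U\<close> K(1) show "u \<in> (\<Union>v\<in>K. {u. H_end u v < e})" by blast
  qed
  with K(1,2) show "\<exists>K. finite K \<and> K \<subseteq> U \<and> U \<subseteq> (\<Union>v\<in>K. {u. H_end u v < e})" by blast
qed

theorem theorem5p8:
  fixes U :: "('a::metric_space \<Rightarrow> real) set"
  assumes "U \<subseteq> F_USCG"
  shows "Hend_totally_bounded U \<longleftrightarrow>
         (\<forall>\<alpha>\<in>{0<..1}. totally_bounded (\<Union>u\<in>U. cut u \<alpha>))"
proof
  assume "Hend_totally_bounded U"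
  then show "\<forall>\<alpha>\<in>{0<..1}. totally_bounded (\<Union>u\<in>U. cut u \<alpha>)"
    using totally_bounded_cut_Union_if_Hend_totally_bounded[OF assms] by simp
next
  assume "\<forall>\<alpha>\<in>{0<..1}. totally_bounded (\<Union>u\<in>U. cut u \<alpha>)"
  then show "Hend_totally_bounded U"
    by (intro Hend_totally_bounded_if_cut_Union_totally_bounded[OF assms]) simp
qed

end
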